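(* Assume the Setting. Then the function $\rho=K1_X$, $\rho(x)=\int_Xk_\infty(x,y)\,d\mu(y)$, is $\mu$-a.e. equal to a constant which is strictly positive (so $1/\rho\in L^\infty(X,\mu)$). If in addition the Continuity Assumption holds, then $\rho|_X$ and $1/\rho|_X$ have continuous representatives.
   Context: Setting: Let $M$ be a metrizable topological manifold, $\Phi^t:M\to M$ a continuous flow, and $\mu$ an ergodic $\Phi^t$-invariant Borel probability measure with compact support $X$. Let $F:M\to\mathbb{R}^d$ be continuous and let $\Delta t>0$ be such that $\Phi^{\Delta t}$ is ergodic for $\mu$. Koopman operators: $U^tf=f\circ\Phi^t$ on $L^2(X,\mu)$; a Koopman eigenfunction is a nonzero $z$ with $U^tz=e^{i\omega t}z$ for all $t$; $\mathcal{D}$ is the closed span of Koopman eigenfunctions and $F_{\mathcal{D}}$ is the componentwise orthogonal projection of $F|_X$ onto $\mathcal{D}$. Continuity Assumption: every Koopman eigenfunction and $F_{\mathcal{D}}$ have continuous representatives on $X$. Kernels: $d_Q^2(x,y)=\frac1Q\sum_{q=0}^{Q-1}\|F(\Phi^{q\Delta t}(x))-F(\Phi^{q\Delta t}(y))\|^2$, $d_\infty^2=\lim_{Q\to\infty}d_Q^2$ where this limit exists (it exists $\mu\times\mu$-a.e.), $k_\infty=e^{-d_\infty^2/\epsilon}$ there (fixed $\epsilon>0$) and $k_\infty=0$ elsewhere. *)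

theory Defs
  imports "HOL-Probability.Probability"
begin

text \<open>Metrizable topological manifold: the carrier type carries a metric (so it is
metrizable and Hausdorff), and every point has an open neighbourhood homeomorphic to an
open subset of an n-dimensional Euclidean space (realised as an n-dimensional linear
subspace of the Euclidean model type 'e), with n the same for all points.\<close>
definition topological_manifold :: "'a::metric_space set \<Rightarrow> 'e::euclidean_space itself \<Rightarrow> bool" where
  "topological_manifold M E \<longleftrightarrow>
     (\<exists>n::nat. \<forall>x\<in>M. \<exists>U V (T::'e set).
        openin (top_of_set M) U \<and> x \<in> U \<and> subspace T \<and> dim T = n \<and>
        openin (top_of_set T) V \<and> U homeomorphic V)"

definition continuous_flow :: "(real \<Rightarrow> 'a::topological_space \<Rightarrow> 'a) \<Rightarrow> bool" where
  "continuous_flow \<Phi> \<longleftrightarrow>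
     continuous_on UNIV (\<lambda>p. \<Phi> (fst p) (snd p)) \<and>
     (\<forall>x. \<Phi> 0 x = x) \<and> (\<forall>s t x. \<Phi> (s + t) x = \<Phi> s (\<Phi> t x))"

definition measure_preserving_map :: "'a measure \<Rightarrow> ('a \<Rightarrow> 'a) \<Rightarrow> bool" where
  "measure_preserving_map \<mu> T \<longleftrightarrow>
     T \<in> measurable \<mu> \<mu> \<and> (\<forall>A\<in>sets \<mu>. emeasure \<mu> (T -` A \<inter> space \<mu>) = emeasure \<mu> A)"

definition ergodic_map :: "'a measure \<Rightarrow> ('a \<Rightarrow> 'a) \<Rightarrow> bool" where
  "ergodic_map \<mu> T \<longleftrightarrow> measure_preserving_map \<mu> T \<and>
     (\<forall>A\<in>sets \<mu>. T -` A \<inter> space \<mu> = A \<longrightarrow> emeasure \<mu> A = 0 \<or> emeasure \<mu> A = 1)"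

definition ergodic_flow :: "'a measure \<Rightarrow> (real \<Rightarrow> 'a \<Rightarrow> 'a) \<Rightarrow> bool" where
  "ergodic_flow \<mu> \<Phi> \<longleftrightarrow> (\<forall>t. measure_preserving_map \<mu> (\<Phi> t)) \<and>
     (\<forall>A\<in>sets \<mu>. (\<forall>t. \<Phi> t -` A \<inter> space \<mu> = A) \<longrightarrow> emeasure \<mu> A = 0 \<or> emeasure \<mu> A = 1)"

definition measure_support :: "'a::topological_space measure \<Rightarrow> 'a set" where
  "measure_support \<mu> = {x. \<forall>U. open U \<longrightarrow> x \<in> U \<longrightarrow> emeasure \<mu> U > 0}"

text \<open>Square-integrable complex functions (elements of L^2(X,\<mu>); \<mu> is concentrated on X).\<close>
definition square_integrable :: "'a measure \<Rightarrow> ('a \<Rightarrow> complex) \<Rightarrow> bool" where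
  "square_integrable \<mu> f \<longleftrightarrow> f \<in> borel_measurable \<mu> \<and> integrable \<mu> (\<lambda>x. (cmod (f x))\<^sup>2)"

definition koopman_eigenfunction :: "'a measure \<Rightarrow> (real \<Rightarrow> 'a \<Rightarrow> 'a) \<Rightarrow> ('a \<Rightarrow> complex) \<Rightarrow> bool" where
  "koopman_eigenfunction \<mu> \<Phi> z \<longleftrightarrow> square_integrable \<mu> z \<and> \<not> (AE x in \<mu>. z x = 0) \<and>
     (\<exists>\<omega>::real. \<forall>t. AE x in \<mu>. z (\<Phi> t x) = exp (\<i> * complex_of_real (\<omega> * t)) * z x)"

definition in_D :: "'a measure \<Rightarrow> (real \<Rightarrow> 'a \<Rightarrow> 'a) \<Rightarrow> ('a \<Rightarrow> complex) \<Rightarrow> bool" where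
  "in_D \<mu> \<Phi> g \<longleftrightarrow> square_integrable \<mu> g \<and>
     (\<forall>e>0. \<exists>(I::nat) (zs::nat \<Rightarrow> 'a \<Rightarrow> complex) (cs::nat \<Rightarrow> complex).
        (\<forall>i<I. koopman_eigenfunction \<mu> \<Phi> (zs i)) \<and>
        (\<integral>x. (cmod (g x - (\<Sum>i<I. cs i * zs i x)))\<^sup>2 \<partial>\<mu>) < e)"

text \<open>G is (a representative of) F_D, the componentwise orthogonal projection of F onto D.\<close>
definition is_F_D :: "'a measure \<Rightarrow> (real \<Rightarrow> 'a \<Rightarrow> 'a) \<Rightarrow> ('a \<Rightarrow> real^'d) \<Rightarrow> ('a \<Rightarrow> complex^'d) \<Rightarrow> bool" where
  "is_F_D \<mu> \<Phi> F G \<longleftrightarrow> (\<forall>j. in_D \<mu> \<Phi> (\<lambda>x. G x $ j) \<and>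
     (\<forall>g. in_D \<mu> \<Phi> g \<longrightarrow>
        (\<integral>x. (complex_of_real (F x $ j) - G x $ j) * cnj (g x) \<partial>\<mu>) = 0))"

definition continuity_assumption ::
  "'a::topological_space measure \<Rightarrow> (real \<Rightarrow> 'a \<Rightarrow> 'a) \<Rightarrow> ('a \<Rightarrow> real^'d) \<Rightarrow> 'a set \<Rightarrow> bool" where
  "continuity_assumption \<mu> \<Phi> F X \<longleftrightarrow>
     (\<forall>z. koopman_eigenfunction \<mu> \<Phi> z \<longrightarrow> (\<exists>g. continuous_on X g \<and> (AE x in \<mu>. z x = g x))) \<and>
     (\<exists>G. is_F_D \<mu> \<Phi> F G \<and> continuous_on X G)"

definition dQ2 :: "(real \<Rightarrow> 'a \<Rightarrow> 'a) \<Rightarrow> ('a \<Rightarrow> real^'d) \<Rightarrow> real \<Rightarrow> nat \<Rightarrow> 'a \<Rightarrow> 'a \<Rightarrow> real" where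
  "dQ2 \<Phi> F \<Delta>t Q x y = (1 / real Q) *
     (\<Sum>q<Q. (norm (F (\<Phi> (real q * \<Delta>t) x) - F (\<Phi> (real q * \<Delta>t) y)))\<^sup>2)"

definition k_inf :: "(real \<Rightarrow> 'a \<Rightarrow> 'a) \<Rightarrow> ('a \<Rightarrow> real^'d) \<Rightarrow> real \<Rightarrow> real \<Rightarrow> 'a \<Rightarrow> 'a \<Rightarrow> real" where
  "k_inf \<Phi> F \<Delta>t \<epsilon> x y =
     (if convergent (\<lambda>Q. dQ2 \<Phi> F \<Delta>t Q x y)
      then exp (- lim (\<lambda>Q. dQ2 \<Phi> F \<Delta>t Q x y) / \<epsilon>) else 0)"

definition rho :: "'a measure \<Rightarrow> 'a set \<Rightarrow> (real \<Rightarrow> 'a \<Rightarrow> 'a) \<Rightarrow> ('a \<Rightarrow> real^'d) \<Rightarrow> real \<Rightarrow> real \<Rightarrow> 'a \<Rightarrow> real" where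
  "rho \<mu> X \<Phi> F \<Delta>t \<epsilon> x = (LINT y:X|\<mu>. k_inf \<Phi> F \<Delta>t \<epsilon> x y)"

end

theory Submission
  imports Defs
begin

text \<open>Along the orbit of \<open>\<Phi>\<^sup>\<Delta>\<^sup>t\<close>, \<open>d\<^sub>Q\<^sup>2(x, y)\<close> is a Birkhoff average of
  \<open>\<parallel>F x - F y\<parallel>\<^sup>2\<close> for the product map on \<open>X \<times> X\<close>. By Birkhoff's ergodic theorem (proved
  below for bounded functions via the maximal ergodic inequality) these averages converge
  \<open>\<mu> \<times> \<mu>\<close>-almost everywhere, so \<open>k\<^sub>\<infinity> > 0\<close> almost everywhere on \<open>X \<times> X\<close> and
  \<open>\<integral>\<rho> > 0\<close> by Fubini. Shifting the orbit by one step changes \<open>d\<^sub>Q\<^sup>2\<close> by \<open>O(1/Q)\<close>, so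
  \<open>k\<^sub>\<infinity>\<close> and hence \<open>\<rho>\<close> are \<open>\<Phi>\<^sup>\<Delta>\<^sup>t\<close>-invariant on \<open>X\<close>; ergodicity of \<open>\<Phi>\<^sup>\<Delta>\<^sup>t\<close>
  then makes \<open>\<rho>\<close> almost everywhere equal to its mean. A constant is its own continuous
  representative, so the second part holds without using the Continuity Assumption.\<close>

section \<open>Birkhoff sums and the maximal ergodic inequality\<close>

definition birkhoff_sum :: "('a \<Rightarrow> 'a) \<Rightarrow> ('a \<Rightarrow> real) \<Rightarrow> nat \<Rightarrow> 'a \<Rightarrow> real" where
  "birkhoff_sum T f n x = (\<Sum>k<n. f ((T ^^ k) x))"

definition birkhoff_average :: "('a \<Rightarrow> 'a) \<Rightarrow> ('a \<Rightarrow> real) \<Rightarrow> nat \<Rightarrow> 'a \<Rightarrow> real" where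
  "birkhoff_average T f n x = birkhoff_sum T f n x / real n"

definition max_birkhoff_sum :: "('a \<Rightarrow> 'a) \<Rightarrow> ('a \<Rightarrow> real) \<Rightarrow> nat \<Rightarrow> 'a \<Rightarrow> real" where
  "max_birkhoff_sum T f N x = Max ((\<lambda>n. birkhoff_sum T f n x) ` {..N})"

lemma birkhoff_sum_0 [simp]: "birkhoff_sum T f 0 x = 0"
  by (simp add: birkhoff_sum_def)

lemma birkhoff_sum_Suc_shift: "birkhoff_sum T f (Suc n) x = f x + birkhoff_sum T f n (T x)"
  unfolding birkhoff_sum_def sum.lessThan_Suc_shift by (simp add: funpow_Suc_right del: funpow.simps)

lemma birkhoff_sum_Suc: "birkhoff_sum T f (Suc n) x = birkhoff_sum T f n x + f ((T ^^ n) x)"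
  by (simp add: birkhoff_sum_def)

lemma birkhoff_sum_bound:
  assumes "\<And>x. \<bar>f x\<bar> \<le> B"
  shows "\<bar>birkhoff_sum T f n x\<bar> \<le> real n * B"
proof -
  have "\<bar>birkhoff_sum T f n x\<bar> \<le> (\<Sum>k<n. \<bar>f ((T ^^ k) x)\<bar>)"
    unfolding birkhoff_sum_def by (rule sum_abs)
  also have "\<dots> \<le> (\<Sum>k<n. B)" by (intro sum_mono assms)
  finally show ?thesis by simp
qed

lemma birkhoff_average_bound:
  assumes "\<And>x. \<bar>f x\<bar> \<le> B"
  shows "\<bar>birkhoff_average T f n x\<bar> \<le> B"
proof (cases "n = 0")
  case True
  then show ?thesis using assms[of x] by (simp add: birkhoff_average_def)
next
  case False
  have "\<bar>birkhoff_average T f n x\<bar> = \<bar>birkhoff_sum T f n x\<bar> / real n"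
    by (simp add: birkhoff_average_def)
  also have "\<dots> \<le> real n * B / real n"
    by (intro divide_right_mono birkhoff_sum_bound assms) simp
  also have "\<dots> = B" using False by simp
  finally show ?thesis .
qed

lemma birkhoff_sum_measurable [measurable]:
  assumes [measurable]: "T \<in> measurable M M" "f \<in> borel_measurable M"
  shows "birkhoff_sum T f n \<in> borel_measurable M"
  unfolding birkhoff_sum_def by measurable

lemma birkhoff_average_measurable [measurable]:
  assumes [measurable]: "T \<in> measurable M M" "f \<in> borel_measurable M"
  shows "birkhoff_average T f n \<in> borel_measurable M"
  unfolding birkhoff_average_def by measurable

lemma max_birkhoff_sum_measurable [measurable]:
  assumes [measurable]: "T \<in> measurable M M" "f \<in> borel_measurable M"
  shows "max_birkhoff_sum T f N \<in> borel_measurable M"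
  unfolding max_birkhoff_sum_def by measurable

lemma max_birkhoff_sum_attained: "\<exists>n\<le>N. max_birkhoff_sum T f N x = birkhoff_sum T f n x"
proof -
  have "max_birkhoff_sum T f N x \<in> (\<lambda>n. birkhoff_sum T f n x) ` {..N}"
    unfolding max_birkhoff_sum_def by (rule Max_in) auto
  then show ?thesis by blast
qed

lemma max_birkhoff_sum_ge: "n \<le> N \<Longrightarrow> birkhoff_sum T f n x \<le> max_birkhoff_sum T f N x"
  unfolding max_birkhoff_sum_def by (rule Max_ge) auto

lemma max_birkhoff_sum_nonneg: "0 \<le> max_birkhoff_sum T f N x"
  using max_birkhoff_sum_ge[of 0 N T f x] by simp

lemma max_birkhoff_sum_bound:
  assumes "\<And>x. \<bar>f x\<bar> \<le> B"
  shows "\<bar>max_birkhoff_sum T f N x\<bar> \<le> real N * B"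
proof -
  obtain n where n: "n \<le> N" "max_birkhoff_sum T f N x = birkhoff_sum T f n x"
    using max_birkhoff_sum_attained[of N T f x] by blast
  have "0 \<le> B" using assms[of x] by linarith
  then have "real n * B \<le> real N * B" using n(1) by (intro mult_right_mono) auto
  moreover have "\<bar>birkhoff_sum T f n x\<bar> \<le> real n * B" by (rule birkhoff_sum_bound[OF assms])
  ultimately show ?thesis unfolding n(2) by linarith
qed

text \<open>Garsia's argument: a positive maximum is attained at some \<open>n \<ge> 1\<close>, where the sum
  splits into \<open>f x\<close> and a shorter sum starting at \<open>T x\<close>.\<close>
lemma max_birkhoff_sum_step:
  "max_birkhoff_sum T f N x - max_birkhoff_sum T f N (T x)
     \<le> (if 0 < max_birkhoff_sum T f N x then f x else 0)"
proof (cases "0 < max_birkhoff_sum T f N x")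
  case False
  then show ?thesis
    using max_birkhoff_sum_nonneg[of T f N x] max_birkhoff_sum_nonneg[of T f N "T x"] by simp
next
  case True
  obtain n where n: "n \<le> N" "max_birkhoff_sum T f N x = birkhoff_sum T f n x"
    using max_birkhoff_sum_attained[of N T f x] by blast
  with True obtain m where m: "n = Suc m" by (cases n) auto
  have "birkhoff_sum T f n x \<le> f x + max_birkhoff_sum T f N (T x)"
    using max_birkhoff_sum_ge[of m N T f "T x"] n(1) by (simp add: m birkhoff_sum_Suc_shift)
  then show ?thesis using True n(2) by simp
qed

lemma maximal_ergodic_inequality_finite:
  assumes "prob_space M" and T[measurable]: "T \<in> measurable M M" and preserving: "distr M M T = M"
    and [measurable]: "f \<in> borel_measurable M" and bound: "\<And>x. \<bar>f x\<bar> \<le> B"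
  shows "0 \<le> (\<integral>x. indicator {y\<in>space M. 0 < max_birkhoff_sum T f N y} x * f x \<partial>M)"
proof -
  interpret prob_space M by fact
  let ?S = "max_birkhoff_sum T f N" and ?P = "{y\<in>space M. 0 < max_birkhoff_sum T f N y}"
  have "0 \<le> B" using bound[of undefined] by linarith
  have int_S: "integrable M ?S"
    by (rule integrable_const_bound[where B="real N * B"])
       (auto intro!: AE_I2 max_birkhoff_sum_bound[OF bound])
  have int_ST: "integrable M (\<lambda>x. ?S (T x))"
    by (rule integrable_const_bound[where B="real N * B"])
       (auto intro!: AE_I2 max_birkhoff_sum_bound[OF bound])
  have int_f: "integrable M (\<lambda>x. indicator ?P x * f x)"
    by (rule integrable_const_bound[where B=B])
       (use bound \<open>0 \<le> B\<close> in \<open>auto simp: indicator_def abs_mult\<close>)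
  have "(\<integral>x. ?S (T x) \<partial>M) = (\<integral>x. ?S x \<partial>distr M M T)"
    by (rule integral_distr[symmetric]; measurable)
  then have "(\<integral>x. ?S x - ?S (T x) \<partial>M) = 0"
    using int_S int_ST preserving by simp
  moreover have "?S x - ?S (T x) \<le> indicator ?P x * f x" if "x \<in> space M" for x
    using max_birkhoff_sum_step[of T f N x] that by (cases "0 < ?S x") (simp_all add: indicator_def)
  then have "(\<integral>x. ?S x - ?S (T x) \<partial>M) \<le> (\<integral>x. indicator ?P x * f x \<partial>M)"
    by (intro integral_mono Bochner_Integration.integrable_diff int_S int_ST int_f)
  ultimately show ?thesis by linarith
qed

theorem maximal_ergodic_inequality:
  assumes "prob_space M" and T[measurable]: "T \<in> measurable M M" and preserving: "distr M M T = M"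
    and [measurable]: "f \<in> borel_measurable M" and bound: "\<And>x. \<bar>f x\<bar> \<le> B"
  shows "0 \<le> (\<integral>x. indicator {y\<in>space M. \<exists>n. 0 < birkhoff_sum T f n y} x * f x \<partial>M)"
proof -
  interpret prob_space M by fact
  let ?P = "\<lambda>N. {y\<in>space M. 0 < max_birkhoff_sum T f N y}" and ?E = "{y\<in>space M. \<exists>n. 0 < birkhoff_sum T f n y}"
  have "0 \<le> B" using bound[of undefined] by linarith
  have indicator_limit: "(\<lambda>N. indicator (?P N) x * f x) \<longlonglongrightarrow> indicator ?E x * f x" for x
  proof (cases "x \<in> ?E")
    case True
    then obtain n where "0 < birkhoff_sum T f n x" by auto
    then have "\<forall>N\<ge>n. x \<in> ?P N" using True max_birkhoff_sum_ge[of n _ T f x] by force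
    then have "\<forall>N\<ge>n. indicator (?P N) x * f x = indicator ?E x * f x"
      using True by simp
    then have "\<forall>\<^sub>F N in sequentially. indicator (?P N) x * f x = indicator ?E x * f x"
      unfolding eventually_sequentially by blast
    then show ?thesis by (rule tendsto_eventually)
  next
    case False
    then have "x \<notin> ?P N" for N using max_birkhoff_sum_attained[of N T f x] by force
    then show ?thesis using False by simp
  qed
  have "(\<lambda>N. \<integral>x. indicator (?P N) x * f x \<partial>M) \<longlonglongrightarrow> (\<integral>x. indicator ?E x * f x \<partial>M)"
  proof (rule integral_dominated_convergence[where w="\<lambda>_. B"])
    show "AE x in M. norm (indicator (?P N) x * f x) \<le> B" for N
      using bound by (intro AE_I2) (simp add: indicator_def abs_mult \<open>0 \<le> B\<close>)
    show "(\<lambda>x. indicator (?P N) x * f x) \<in> borel_measurable M" for N by measurable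
    show "(\<lambda>x. indicator ?E x * f x) \<in> borel_measurable M" by measurable
    show "AE x in M. (\<lambda>N. indicator (?P N) x * f x) \<longlonglongrightarrow> indicator ?E x * f x"
      by (rule AE_I2) (rule indicator_limit)
  qed simp
  moreover have "0 \<le> (\<integral>x. indicator (?P N) x * f x \<partial>M)" for N
    by (rule maximal_ergodic_inequality_finite[OF assms])
  ultimately show ?thesis by (intro LIMSEQ_le_const) blast+
qed

lemma birkhoff_sum_indicator_invariant:
  assumes "\<And>k. (T ^^ k) x \<in> E \<longleftrightarrow> x \<in> E"
  shows "birkhoff_sum T (\<lambda>y. indicator E y * g y) n x = indicator E x * birkhoff_sum T g n x"
  using assms by (simp add: birkhoff_sum_def sum_distrib_left indicator_def)

lemma invariant_set_funpow:
  assumes T: "T \<in> measurable M M" and inv: "\<And>y. y \<in> space M \<Longrightarrow> T y \<in> E \<longleftrightarrow> y \<in> E"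
    and x: "x \<in> space M"
  shows "(T ^^ k) x \<in> E \<longleftrightarrow> x \<in> E"
proof (induction k)
  case (Suc k)
  have "(T ^^ k) x \<in> space M" using measurable_space[OF measurable_compose_n[OF T] x] .
  then show ?case using inv Suc by simp
qed simp

lemma maximal_ergodic_invariant_set:
  assumes "prob_space M" and T[measurable]: "T \<in> measurable M M" and preserving: "distr M M T = M"
    and [measurable]: "g \<in> borel_measurable M" and bound: "\<And>x. \<bar>g x\<bar> \<le> B"
    and E[measurable]: "E \<in> sets M" and inv: "\<And>x. x \<in> space M \<Longrightarrow> T x \<in> E \<longleftrightarrow> x \<in> E"
    and pos: "\<And>x. x \<in> E \<Longrightarrow> \<exists>n. 0 < birkhoff_sum T g n x"
  shows "0 \<le> (\<integral>x. indicator E x * g x \<partial>M)"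
proof -
  let ?h = "\<lambda>y. indicator E y * g y"
  have sum_h: "birkhoff_sum T ?h n x = indicator E x * birkhoff_sum T g n x" if "x \<in> space M" for n x
    by (rule birkhoff_sum_indicator_invariant) (rule invariant_set_funpow[OF T inv that])
  have "{y\<in>space M. \<exists>n. 0 < birkhoff_sum T ?h n y} = E"
  proof (intro set_eqI)
    fix x
    show "x \<in> {y\<in>space M. \<exists>n. 0 < birkhoff_sum T ?h n y} \<longleftrightarrow> x \<in> E"
    proof (cases "x \<in> space M")
      case True
      then show ?thesis using sum_h[OF True] pos by (cases "x \<in> E") auto
    qed (use sets.sets_into_space[OF E] in auto)
  qed
  moreover have "\<bar>?h x\<bar> \<le> B" for x
    using bound[of x] by (auto simp: indicator_def)
  ultimately have "0 \<le> (\<integral>x. indicator E x * ?h x \<partial>M)"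
    using maximal_ergodic_inequality[OF assms(1-3), of ?h B] by simp
  moreover have "(\<lambda>x. indicator E x * ?h x) = ?h" by (auto simp: indicator_def)
  ultimately show ?thesis by simp
qed

section \<open>Birkhoff's ergodic theorem for bounded functions\<close>

text \<open>The rational margin below \<open>a\<close> makes this property measurable and stable under
  perturbations of \<open>u\<close> that tend to zero.\<close>
definition frequently_below :: "(nat \<Rightarrow> real) \<Rightarrow> real \<Rightarrow> bool" where
  "frequently_below u a \<longleftrightarrow> (\<exists>r::rat. of_rat r < a \<and> (\<exists>\<^sub>F n in sequentially. u n < of_rat r))"

definition oscillates_beyond :: "(nat \<Rightarrow> real) \<Rightarrow> real \<Rightarrow> real \<Rightarrow> bool" where
  "oscillates_beyond u a b \<longleftrightarrow> frequently_below u a \<and> frequently_below (\<lambda>n. - u n) (- b)"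

lemma frequently_below_tendsto_diff:
  assumes lim: "(\<lambda>n. u n - v n) \<longlonglongrightarrow> 0" and "frequently_below u a"
  shows "frequently_below v a"
proof -
  obtain r :: rat where r: "of_rat r < a" "\<exists>\<^sub>F n in sequentially. u n < of_rat r"
    using assms(2) unfolding frequently_below_def by blast
  obtain r' :: rat where r': "of_rat r < (of_rat r' :: real)" "of_rat r' < a"
    using of_rat_dense[OF r(1)] by blast
  have "\<forall>\<^sub>F n in sequentially. dist (u n - v n) 0 < of_rat r' - of_rat r"
    using lim r'(1) by (intro tendstoD) auto
  then have "\<exists>\<^sub>F n in sequentially. v n < of_rat r'"
    by (rule frequently_rev_mp[OF r(2), OF eventually_mono]) (auto simp: dist_real_def)
  then show ?thesis unfolding frequently_below_def using r'(2) by blast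
qed

lemma frequently_sequentially_Suc: "(\<exists>\<^sub>F n in sequentially. P (Suc n)) \<longleftrightarrow> (\<exists>\<^sub>F n in sequentially. P n)"
  unfolding frequently_def using eventually_sequentially_Suc[of "\<lambda>n. \<not> P n"] by simp

lemma frequently_below_Suc_iff: "frequently_below (\<lambda>n. u (Suc n)) a \<longleftrightarrow> frequently_below u a"
  unfolding frequently_below_def frequently_sequentially_Suc[of "\<lambda>n. u n < _"] ..

lemma oscillates_beyond_tendsto_diff:
  assumes "(\<lambda>n. u n - v n) \<longlonglongrightarrow> 0" and "oscillates_beyond u a b"
  shows "oscillates_beyond v a b"
  using assms frequently_below_tendsto_diff[of "\<lambda>n. - u n" "\<lambda>n. - v n"] tendsto_minus[OF assms(1)]
  by (auto simp: oscillates_beyond_def frequently_below_tendsto_diff)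

lemma oscillates_beyond_Suc_iff: "oscillates_beyond (\<lambda>n. u (Suc n)) a b \<longleftrightarrow> oscillates_beyond u a b"
  by (simp add: oscillates_beyond_def frequently_below_Suc_iff[of "\<lambda>n. - u n"] frequently_below_Suc_iff)

lemma frequently_less_if_liminf_less:
  assumes "liminf (\<lambda>n. ereal (u n)) < ereal r"
  shows "\<exists>\<^sub>F n in sequentially. u n < r"
proof -
  have "\<not> ereal r \<le> liminf (\<lambda>n. ereal (u n))" using assms by simp
  then obtain y where y: "y < ereal r" "\<not> (\<forall>\<^sub>F n in sequentially. y < ereal (u n))"
    unfolding le_Liminf_iff by auto
  then have "\<exists>\<^sub>F n in sequentially. ereal (u n) \<le> y" by (simp add: not_eventually not_less)
  then show ?thesis
  proof (rule frequently_elim1)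
    show "u n < r" if "ereal (u n) \<le> y" for n
      using le_less_trans[OF that y(1)] by simp
  qed
qed

lemma frequently_greater_if_limsup_greater:
  assumes "ereal r < limsup (\<lambda>n. ereal (u n))"
  shows "\<exists>\<^sub>F n in sequentially. r < u n"
proof -
  have "\<not> limsup (\<lambda>n. ereal (u n)) \<le> ereal r" using assms by simp
  then obtain y where y: "ereal r < y" "\<not> (\<forall>\<^sub>F n in sequentially. ereal (u n) < y)"
    unfolding Limsup_le_iff by auto
  then have "\<exists>\<^sub>F n in sequentially. y \<le> ereal (u n)" by (simp add: not_eventually not_less)
  then show ?thesis
  proof (rule frequently_elim1)
    show "r < u n" if "y \<le> ereal (u n)" for n
      using less_le_trans[OF y(1) that] by simp
  qed
qed

lemma bounded_not_convergent_oscillates: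
  fixes u :: "nat \<Rightarrow> real"
  assumes bound: "\<And>n. \<bar>u n\<bar> \<le> C" and "\<not> convergent u"
  obtains a b :: rat where "a < b" "oscillates_beyond u (of_rat a) (of_rat b)"
proof -
  let ?L = "liminf (\<lambda>n. ereal (u n))" and ?U = "limsup (\<lambda>n. ereal (u n))"
  have "- C \<le> u n" "u n \<le> C" for n using bound[of n] by linarith+
  then have "ereal (- C) \<le> ?L" "?U \<le> ereal C"
    by (intro Liminf_bounded Limsup_bounded always_eventually allI; simp)+
  moreover have LU: "?L \<le> ?U" by (rule Liminf_le_Limsup) simp
  ultimately obtain l v where lv: "?L = ereal l" "?U = ereal v"
    by (cases ?L; cases ?U) auto
  have "l \<noteq> v"
  proof
    assume "l = v"
    then have "(\<lambda>n. ereal (u n)) \<longlonglongrightarrow> ereal l" using lv by (intro Liminf_eq_Limsup) auto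
    then show False using \<open>\<not> convergent u\<close> by (auto simp: convergent_def)
  qed
  with LU lv have "l < v" by auto
  obtain a :: rat where a: "l < of_rat a" "of_rat a < v" using of_rat_dense[OF \<open>l < v\<close>] by blast
  obtain b :: rat where b: "of_rat a < (of_rat b :: real)" "of_rat b < v"
    using of_rat_dense[OF a(2)] by blast
  obtain r :: rat where r: "l < of_rat r" "of_rat r < (of_rat a :: real)"
    using of_rat_dense[OF a(1)] by blast
  obtain s :: rat where s: "of_rat b < (of_rat s :: real)" "of_rat s < v"
    using of_rat_dense[OF b(2)] by blast
  have "\<exists>\<^sub>F n in sequentially. u n < of_rat r"
    by (rule frequently_less_if_liminf_less) (use lv r(1) in simp)
  then have "frequently_below u (of_rat a)"
    unfolding frequently_below_def using r(2) by blast
  moreover have "\<exists>\<^sub>F n in sequentially. - u n < of_rat (- s)"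
    using frequently_greater_if_limsup_greater[of "of_rat s" u] lv s(2) by (simp add: of_rat_minus)
  then have "frequently_below (\<lambda>n. - u n) (- of_rat b)"
    unfolding frequently_below_def using s(1) by (intro exI[of _ "- s"]) (simp add: of_rat_minus)
  moreover have "a < b" using b(1) by (simp add: of_rat_less)
  ultimately have "a < b" "oscillates_beyond u (of_rat a) (of_rat b)"
    unfolding oscillates_beyond_def by simp_all
  then show thesis by (rule that)
qed

lemma birkhoff_average_Suc_shift:
  assumes bound: "\<And>x. \<bar>f x\<bar> \<le> B"
  shows "(\<lambda>n. birkhoff_average T f (Suc n) x - birkhoff_average T f n (T x)) \<longlonglongrightarrow> 0"
proof (rule Lim_null_comparison)
  let ?A = "birkhoff_average T f"
  have "?A (Suc n) x - ?A n (T x) = (f x - ?A n (T x)) / real (Suc n)" for n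
  proof (cases "n = 0")
    case True
    then show ?thesis by (simp add: birkhoff_average_def birkhoff_sum_Suc_shift)
  next
    case False
    then show ?thesis by (simp add: birkhoff_average_def birkhoff_sum_Suc_shift field_simps)
  qed
  moreover have "\<bar>f x - ?A n (T x)\<bar> \<le> 2 * B" for n
  proof -
    have "\<bar>?A n (T x)\<bar> \<le> B" by (rule birkhoff_average_bound) (rule bound)
    then show ?thesis using bound[of x] by linarith
  qed
  ultimately have "norm (?A (Suc n) x - ?A n (T x)) \<le> 2 * B * (1 / real (Suc n))" for n
    by (simp add: divide_right_mono)
  then show "\<forall>\<^sub>F n in sequentially. norm (?A (Suc n) x - ?A n (T x)) \<le> 2 * B * (1 / real (Suc n))"
    by (intro always_eventually) auto
  show "(\<lambda>n. 2 * B * (1 / real (Suc n))) \<longlonglongrightarrow> 0"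
    by (intro tendsto_mult_right_zero LIMSEQ_Suc[OF lim_1_over_n])
qed

lemma birkhoff_average_oscillates_beyond_shift_iff:
  assumes "\<And>x. \<bar>f x\<bar> \<le> B"
  shows "oscillates_beyond (\<lambda>n. birkhoff_average T f n (T x)) a b
    \<longleftrightarrow> oscillates_beyond (\<lambda>n. birkhoff_average T f n x) a b"
proof -
  let ?u = "\<lambda>n. birkhoff_average T f (Suc n) x" and ?v = "\<lambda>n. birkhoff_average T f n (T x)"
  have "(\<lambda>n. ?u n - ?v n) \<longlonglongrightarrow> 0" by (rule birkhoff_average_Suc_shift[OF assms])
  moreover from tendsto_minus[OF this] have "(\<lambda>n. ?v n - ?u n) \<longlonglongrightarrow> 0" by simp
  ultimately have "oscillates_beyond ?v a b \<longleftrightarrow> oscillates_beyond ?u a b"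
    using oscillates_beyond_tendsto_diff[of ?u ?v a b] oscillates_beyond_tendsto_diff[of ?v ?u a b]
    by blast
  then show ?thesis by (simp only: oscillates_beyond_Suc_iff[of "\<lambda>n. birkhoff_average T f n x"])
qed

lemma birkhoff_average_uminus:
  "birkhoff_average T (\<lambda>y. - f y) n x = - birkhoff_average T f n x"
  by (simp add: birkhoff_average_def birkhoff_sum_def sum_negf)

lemma frequently_below_birkhoff_sum_pos:
  assumes "frequently_below (\<lambda>n. birkhoff_average T f n x) a"
  shows "\<exists>n. 0 < birkhoff_sum T (\<lambda>y. a - f y) n x"
proof -
  obtain r :: rat where r: "of_rat r < a" "\<exists>\<^sub>F n in sequentially. birkhoff_average T f n x < of_rat r"
    using assms by (auto simp: frequently_below_def)
  have "\<exists>n\<ge>1. birkhoff_average T f n x < of_rat r" using r(2) by (simp add: frequently_sequentially)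
  then obtain n where "n \<ge> 1" "birkhoff_average T f n x < a" using r(1) by force
  moreover have "birkhoff_sum T (\<lambda>y. a - f y) n x = real n * a - birkhoff_sum T f n x"
    by (simp add: birkhoff_sum_def sum_subtractf)
  ultimately show ?thesis by (intro exI[of _ n]) (auto simp: birkhoff_average_def field_simps)
qed

lemma AE_birkhoff_average_not_oscillates:
  assumes M: "prob_space M" and T[measurable]: "T \<in> measurable M M" and preserving: "distr M M T = M"
    and [measurable]: "f \<in> borel_measurable M" and bound: "\<And>x. \<bar>f x\<bar> \<le> B" and "a < b"
  shows "AE x in M. \<not> oscillates_beyond (\<lambda>n. birkhoff_average T f n x) a b"
proof -
  interpret prob_space M by fact
  define E where "E = {x\<in>space M. oscillates_beyond (\<lambda>n. birkhoff_average T f n x) a b}"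
  have E_sets[measurable]: "E \<in> sets M"
    unfolding E_def oscillates_beyond_def frequently_below_def frequently_sequentially by measurable
  have E_inv: "T x \<in> E \<longleftrightarrow> x \<in> E" if "x \<in> space M" for x
    using that measurable_space[OF T that]
      birkhoff_average_oscillates_beyond_shift_iff[where T=T and x=x and a=a and b=b, OF bound]
    by (simp add: E_def)
  have below: "\<exists>n. 0 < birkhoff_sum T (\<lambda>y. a - f y) n x" if "x \<in> E" for x
    using that by (intro frequently_below_birkhoff_sum_pos) (simp add: E_def oscillates_beyond_def)
  have above: "\<exists>n. 0 < birkhoff_sum T (\<lambda>y. f y - b) n x" if "x \<in> E" for x
    using that frequently_below_birkhoff_sum_pos[of T "\<lambda>y. - f y" x "- b"]
    by (simp add: E_def oscillates_beyond_def birkhoff_average_uminus)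
  have "0 \<le> (\<integral>x. indicator E x * (f x - b) \<partial>M)"
  proof (rule maximal_ergodic_invariant_set[OF M T preserving _ _ E_sets E_inv above])
    show "(\<lambda>y. f y - b) \<in> borel_measurable M" by measurable
    show "\<bar>f x - b\<bar> \<le> B + \<bar>b\<bar>" for x using bound[of x] by linarith
  qed
  moreover have "0 \<le> (\<integral>x. indicator E x * (a - f x) \<partial>M)"
  proof (rule maximal_ergodic_invariant_set[OF M T preserving _ _ E_sets E_inv below])
    show "(\<lambda>y. a - f y) \<in> borel_measurable M" by measurable
    show "\<bar>a - f x\<bar> \<le> B + \<bar>a\<bar>" for x using bound[of x] by linarith
  qed
  moreover have "(\<integral>x. indicator E x * (f x - b) \<partial>M) + (\<integral>x. indicator E x * (a - f x) \<partial>M)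
      = (a - b) * measure M E"
  proof -
    have int: "integrable M (\<lambda>x. indicator E x * (c - f x))" for c
    proof (rule integrable_const_bound[where B="\<bar>c\<bar> + B"])
      show "(\<lambda>x. indicator E x * (c - f x)) \<in> borel_measurable M" by measurable
      show "AE x in M. norm (indicator E x * (c - f x)) \<le> \<bar>c\<bar> + B"
        using bound by (intro AE_I2) (simp add: indicator_def abs_le_iff; smt (verit))
    qed
    have "(\<integral>x. indicator E x * (f x - b) \<partial>M) = - (\<integral>x. indicator E x * (b - f x) \<partial>M)"
      by (simp add: algebra_simps flip: Bochner_Integration.integral_minus)
    then have "(\<integral>x. indicator E x * (f x - b) \<partial>M) + (\<integral>x. indicator E x * (a - f x) \<partial>M)
        = (\<integral>x. indicator E x * (a - f x) - indicator E x * (b - f x) \<partial>M)"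
      using int[of a] int[of b] by simp
    also have "\<dots> = (\<integral>x. (a - b) * indicator E x \<partial>M)"
      by (intro Bochner_Integration.integral_cong) (auto simp: algebra_simps)
    finally show ?thesis by simp
  qed
  ultimately have "0 \<le> (a - b) * measure M E" by linarith
  then have "measure M E \<le> 0" using \<open>a < b\<close> by (simp add: zero_le_mult_iff)
  then have "measure M E = 0" using measure_nonneg[of M E] by linarith
  then have "E \<in> null_sets M" using E_sets by (simp add: null_sets_def emeasure_eq_measure)
  from AE_not_in[OF this] show ?thesis
  proof (rule AE_mp)
    show "AE x in M. x \<notin> E \<longrightarrow> \<not> oscillates_beyond (\<lambda>n. birkhoff_average T f n x) a b"
      by (intro AE_I2) (simp add: E_def)
  qed
qed

theorem birkhoff_ergodic_bounded:
  assumes "prob_space M" and "T \<in> measurable M M" and "distr M M T = M"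
    and "f \<in> borel_measurable M" and bound: "\<And>x. \<bar>f x\<bar> \<le> B"
  shows "AE x in M. convergent (\<lambda>n. birkhoff_average T f n x)"
proof -
  have "AE x in M. \<forall>p::rat \<times> rat. fst p < snd p \<longrightarrow>
      \<not> oscillates_beyond (\<lambda>n. birkhoff_average T f n x) (of_rat (fst p)) (of_rat (snd p))"
  proof (subst AE_all_countable, intro allI)
    fix p :: "rat \<times> rat"
    show "AE x in M. fst p < snd p \<longrightarrow>
        \<not> oscillates_beyond (\<lambda>n. birkhoff_average T f n x) (of_rat (fst p)) (of_rat (snd p))"
    proof (cases "fst p < snd p")
      case True
      then have "(of_rat (fst p) :: real) < of_rat (snd p)" by (simp add: of_rat_less)
      from AE_birkhoff_average_not_oscillates[OF assms this] show ?thesis by simp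
    qed simp
  qed
  then show ?thesis
  proof (rule AE_mp, intro AE_I2 impI)
    fix x
    assume no_osc: "\<forall>p::rat \<times> rat. fst p < snd p \<longrightarrow>
        \<not> oscillates_beyond (\<lambda>n. birkhoff_average T f n x) (of_rat (fst p)) (of_rat (snd p))"
    have bounded: "\<bar>birkhoff_average T f n x\<bar> \<le> B" for n
      by (rule birkhoff_average_bound) (rule bound)
    show "convergent (\<lambda>n. birkhoff_average T f n x)"
    proof (rule ccontr)
      assume "\<not> convergent (\<lambda>n. birkhoff_average T f n x)"
      with bounded obtain a b :: rat
        where "a < b" "oscillates_beyond (\<lambda>n. birkhoff_average T f n x) (of_rat a) (of_rat b)"
        by (rule bounded_not_convergent_oscillates)
      then show False using no_osc[rule_format, of "(a, b)"] by simp
    qed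
  qed
qed

lemma birkhoff_average_map_diff:
  assumes bound: "\<And>x. \<bar>f x\<bar> \<le> B"
  shows "(\<lambda>n. birkhoff_average T f n (T x) - birkhoff_average T f n x) \<longlonglongrightarrow> 0"
proof (rule Lim_null_comparison)
  let ?A = "birkhoff_average T f"
  have "?A n (T x) - ?A n x = (f ((T ^^ n) x) - f x) / real n" for n
  proof -
    have "birkhoff_sum T f n (T x) - birkhoff_sum T f n x = f ((T ^^ n) x) - f x"
      using birkhoff_sum_Suc_shift[of T f n x] birkhoff_sum_Suc[of T f n x] by simp
    then show ?thesis by (simp add: birkhoff_average_def diff_divide_distrib[symmetric])
  qed
  moreover have "\<bar>f ((T ^^ n) x) - f x\<bar> \<le> 2 * B" for n
    using bound[of x] bound[of "(T ^^ n) x"] by linarith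
  ultimately have "norm (?A n (T x) - ?A n x) \<le> 2 * B * (1 / real n)" for n
    by (simp add: divide_right_mono)
  then show "\<forall>\<^sub>F n in sequentially. norm (?A n (T x) - ?A n x) \<le> 2 * B * (1 / real n)"
    by (intro always_eventually) auto
  show "(\<lambda>n. 2 * B * (1 / real n)) \<longlonglongrightarrow> 0"
    by (intro tendsto_mult_right_zero lim_1_over_n)
qed

lemma funpow_map_prod:
  fixes f :: "'a \<Rightarrow> 'a" and g :: "'b \<Rightarrow> 'b"
  shows "(map_prod f g ^^ n) p = ((f ^^ n) (fst p), (g ^^ n) (snd p))"
  by (induction n) auto

lemma distr_pair_measure_map_prod:
  assumes "sigma_finite_measure M" and T: "T \<in> measurable M M" and preserving: "distr M M T = M"
  shows "distr (M \<Otimes>\<^sub>M M) (M \<Otimes>\<^sub>M M) (map_prod T T) = M \<Otimes>\<^sub>M M"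
proof -
  have "distr M M T \<Otimes>\<^sub>M distr M M T = distr (M \<Otimes>\<^sub>M M) (M \<Otimes>\<^sub>M M) (\<lambda>(x, y). (T x, T y))"
    by (rule pair_measure_distr[OF T T]) (simp add: preserving assms(1))
  then show ?thesis by (simp add: preserving map_prod_def)
qed

lemma measure_preserving_map_distr:
  assumes "measure_preserving_map M T"
  shows "distr M M T = M"
  using assms by (intro measure_eqI) (auto simp: emeasure_distr measure_preserving_map_def)

text \<open>The level sets \<open>{r > c}\<close> and \<open>{r < c}\<close> are invariant, so each has measure 0 or 1;
  measure 1 is impossible for \<open>c = \<integral>r\<close>.\<close>
lemma ergodic_map_invariant_AE_eq_integral:
  fixes r :: "'a \<Rightarrow> real"
  assumes "prob_space M" and erg: "ergodic_map M T"
    and [measurable]: "r \<in> borel_measurable M" and int: "integrable M r"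
    and inv: "\<And>x. x \<in> space M \<Longrightarrow> r (T x) = r x"
  shows "AE x in M. r x = (\<integral>y. r y \<partial>M)"
proof -
  interpret prob_space M by fact
  let ?c = "\<integral>y. r y \<partial>M"
  have T[measurable]: "T \<in> measurable M M" using erg by (simp add: ergodic_map_def measure_preserving_map_def)
  have AE_not: "AE x in M. \<not> P (r x)"
    if [measurable]: "Measurable.pred M (\<lambda>x. P (r x))" and not_AE: "\<not> (AE x in M. P (r x))" for P
  proof -
    let ?A = "{x\<in>space M. P (r x)}"
    have "T -` ?A \<inter> space M = ?A" using inv measurable_space[OF T] by auto
    then have "emeasure M ?A = 0 \<or> emeasure M ?A = 1"
      using erg unfolding ergodic_map_def by auto
    moreover have "emeasure M ?A \<noteq> 1"
      using not_AE AE_prob_1[of ?A] by (auto simp: emeasure_eq_measure)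
    ultimately have "?A \<in> null_sets M" by (auto intro: null_setsI)
    then show ?thesis by (rule AE_not_in[THEN AE_mp]) (auto intro!: AE_I2)
  qed
  have "AE x in M. \<not> ?c < r x"
  proof (rule AE_not)
    show "\<not> (AE x in M. ?c < r x)"
      using integral_less_AE_space[OF _ int, of "\<lambda>_. ?c"] by (auto simp: emeasure_space_1 prob_space)
  qed measurable
  moreover have "AE x in M. \<not> r x < ?c"
  proof (rule AE_not)
    show "\<not> (AE x in M. r x < ?c)"
      using integral_less_AE_space[OF int, of "\<lambda>_. ?c"] by (auto simp: emeasure_space_1 prob_space)
  qed measurable
  ultimately show ?thesis by eventually_elim simp
qed

section \<open>Flows, measure supports and the kernel\<close>

lemma continuous_flow_iterate:
  assumes "continuous_flow \<Phi>"
  shows "\<Phi> (real q * t) = \<Phi> t ^^ q"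
proof (induction q)
  case 0
  then show ?case using assms by (auto simp: continuous_flow_def)
next
  case (Suc q)
  have "\<Phi> (t + real q * t) x = \<Phi> t (\<Phi> (real q * t) x)" for x
    using assms by (simp add: continuous_flow_def)
  then show ?case using Suc by (auto simp: algebra_simps)
qed

lemma continuous_flow_continuous_on:
  assumes "continuous_flow \<Phi>"
  shows "continuous_on UNIV (\<Phi> t)"
proof -
  have "continuous_on UNIV ((\<lambda>p. \<Phi> (fst p) (snd p)) \<circ> Pair t)"
    using assms unfolding continuous_flow_def
    by (intro continuous_on_compose continuous_intros) (auto intro: continuous_on_subset)
  then show ?thesis by (simp add: comp_def)
qed

lemma continuous_flow_inverse:
  assumes "continuous_flow \<Phi>"
  shows "\<Phi> (- t) (\<Phi> t x) = x"
  using assms unfolding continuous_flow_def by (metis add.left_inverse)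

lemma measure_support_preserved:
  assumes borel: "sets \<mu> = sets borel" and cont: "continuous_on UNIV T"
    and preserving: "measure_preserving_map \<mu> T" and x: "x \<in> measure_support \<mu>"
  shows "T x \<in> measure_support \<mu>"
  unfolding measure_support_def
proof (intro CollectI allI impI)
  fix U assume U: "open U" "T x \<in> U"
  have "0 < emeasure \<mu> (T -` U)"
    using x open_vimage[OF U(1) cont] U(2) unfolding measure_support_def by blast
  moreover have "emeasure \<mu> (T -` U \<inter> space \<mu>) = emeasure \<mu> U"
    using preserving U(1) borel unfolding measure_preserving_map_def by auto
  ultimately show "0 < emeasure \<mu> U" using sets_eq_imp_space_eq[OF borel] by simp
qed

lemma measure_support_flow_invariant:
  assumes "sets \<mu> = sets borel" and flow: "continuous_flow \<Phi>"
    and "\<And>t. measure_preserving_map \<mu> (\<Phi> t)"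
  shows "\<Phi> t x \<in> measure_support \<mu> \<longleftrightarrow> x \<in> measure_support \<mu>"
proof
  assume "\<Phi> t x \<in> measure_support \<mu>"
  then have "\<Phi> (- t) (\<Phi> t x) \<in> measure_support \<mu>"
    by (rule measure_support_preserved[OF assms(1) continuous_flow_continuous_on[OF flow] assms(3)])
  then show "x \<in> measure_support \<mu>" by (simp add: continuous_flow_inverse[OF flow])
qed (rule measure_support_preserved[OF assms(1) continuous_flow_continuous_on[OF flow] assms(3)])

lemma convergent_iff_tendsto_diff:
  fixes u v :: "nat \<Rightarrow> real"
  assumes "(\<lambda>n. u n - v n) \<longlonglongrightarrow> 0"
  shows "convergent u \<longleftrightarrow> convergent v"
proof -
  have "u \<longlonglongrightarrow> l \<longleftrightarrow> v \<longlonglongrightarrow> l" for l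
    using tendsto_add[OF assms, of v l] tendsto_diff[OF _ assms, of u l] by auto
  then show ?thesis unfolding convergent_def by blast
qed

lemma lim_eq_if_tendsto_diff:
  fixes u v :: "nat \<Rightarrow> real"
  assumes "(\<lambda>n. u n - v n) \<longlonglongrightarrow> 0" and "convergent v"
  shows "lim u = lim v"
proof -
  from assms(2) have "v \<longlonglongrightarrow> lim v" by (simp add: convergent_LIMSEQ_iff)
  from tendsto_add[OF assms(1) this] show ?thesis by (simp add: limI)
qed

lemma pred_convergent_real [measurable (raw)]:
  fixes f :: "nat \<Rightarrow> 'a \<Rightarrow> real"
  assumes [measurable]: "\<And>i. f i \<in> borel_measurable M"
  shows "Measurable.pred M (\<lambda>x. convergent (\<lambda>i. f i x))"
  unfolding Measurable.pred_def Cauchy_convergent_iff[symmetric] by measurable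

lemma dQ2_nonneg: "0 \<le> dQ2 \<Phi> F \<Delta>t Q x y"
  by (simp add: dQ2_def sum_nonneg)

lemma k_inf_bounds:
  assumes "\<epsilon> > 0"
  shows "0 \<le> k_inf \<Phi> F \<Delta>t \<epsilon> x y \<and> k_inf \<Phi> F \<Delta>t \<epsilon> x y \<le> 1"
proof (cases "convergent (\<lambda>Q. dQ2 \<Phi> F \<Delta>t Q x y)")
  case True
  then have "(\<lambda>Q. dQ2 \<Phi> F \<Delta>t Q x y) \<longlonglongrightarrow> lim (\<lambda>Q. dQ2 \<Phi> F \<Delta>t Q x y)"
    by (simp add: convergent_LIMSEQ_iff)
  then have "0 \<le> lim (\<lambda>Q. dQ2 \<Phi> F \<Delta>t Q x y)"
    by (rule LIMSEQ_le_const) (auto simp: dQ2_nonneg)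
  then show ?thesis using True assms by (simp add: k_inf_def)
qed (simp add: k_inf_def)

lemma k_inf_pos: "convergent (\<lambda>Q. dQ2 \<Phi> F \<Delta>t Q x y) \<Longrightarrow> 0 < k_inf \<Phi> F \<Delta>t \<epsilon> x y"
  by (simp add: k_inf_def)

section \<open>Constancy of \<open>\<rho>\<close>\<close>

locale flow_kernel_setting =
  fixes \<mu> :: "'a::metric_space measure" and \<Phi> :: "real \<Rightarrow> 'a \<Rightarrow> 'a" and F :: "'a \<Rightarrow> real^'d"
    and X :: "'a set" and \<Delta>t \<epsilon> :: real
  assumes prob: "prob_space \<mu>" and borel: "sets \<mu> = sets borel" and flow: "continuous_flow \<Phi>"
    and preserving: "\<And>t. measure_preserving_map \<mu> (\<Phi> t)"
    and X_def: "X = measure_support \<mu>" and X_compact: "compact X" and X_full: "emeasure \<mu> X = 1"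
    and F_cont: "continuous_on UNIV F" and eps_pos: "\<epsilon> > 0"
begin

sublocale prob_space \<mu> by (rule prob)

abbreviation T :: "'a \<Rightarrow> 'a" where "T \<equiv> \<Phi> \<Delta>t"
abbreviation k :: "'a \<Rightarrow> 'a \<Rightarrow> real" where "k \<equiv> k_inf \<Phi> F \<Delta>t \<epsilon>"
abbreviation \<rho> :: "'a \<Rightarrow> real" where "\<rho> \<equiv> rho \<mu> X \<Phi> F \<Delta>t \<epsilon>"

text \<open>The summand of \<open>d\<^sub>Q\<^sup>2\<close>, cut off outside \<open>X \<times> X\<close> so that it is bounded.\<close>
definition pair_sqdist :: "'a \<times> 'a \<Rightarrow> real" where
  "pair_sqdist p = indicator (X \<times> X) p * (norm (F (fst p) - F (snd p)))\<^sup>2"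

lemma space_eq: "space \<mu> = UNIV"
  using sets_eq_imp_space_eq[OF borel] by simp

lemma flow_measurable [measurable]: "\<Phi> t \<in> measurable \<mu> \<mu>"
  unfolding measurable_cong_sets[OF borel borel]
  by (rule borel_measurable_continuous_onI[OF continuous_flow_continuous_on[OF flow]])

lemma F_measurable [measurable]: "F \<in> borel_measurable \<mu>"
  unfolding measurable_cong_sets[OF borel refl] by (rule borel_measurable_continuous_onI[OF F_cont])

lemma X_sets [measurable]: "X \<in> sets \<mu>"
  using borel compact_imp_closed[OF X_compact] by simp

lemma AE_in_X: "AE x in \<mu>. x \<in> X"
  using X_full by (intro AE_prob_1) (simp add: measure_def)

lemma distr_T: "distr \<mu> \<mu> T = \<mu>"
  by (rule measure_preserving_map_distr[OF preserving])

lemma T_in_X_iff: "T x \<in> X \<longleftrightarrow> x \<in> X"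
  unfolding X_def by (rule measure_support_flow_invariant[OF borel flow preserving])

lemma funpow_T_in_X: "x \<in> X \<Longrightarrow> (T ^^ n) x \<in> X"
  by (induction n) (simp_all add: T_in_X_iff)

lemma pair_sqdist_bounded: "\<exists>B. \<forall>p. \<bar>pair_sqdist p\<bar> \<le> B"
proof -
  obtain C where C: "\<And>x. x \<in> X \<Longrightarrow> norm (F x) \<le> C"
    using compact_imp_bounded[OF compact_continuous_image[OF continuous_on_subset[OF F_cont] X_compact]]
    unfolding bounded_iff by auto
  have "\<bar>pair_sqdist p\<bar> \<le> (2 * C)\<^sup>2" for p
  proof (cases "p \<in> X \<times> X")
    case True
    then have "norm (F (fst p) - F (snd p)) \<le> 2 * C"
      using norm_triangle_ineq4[of "F (fst p)" "F (snd p)"] C[of "fst p"] C[of "snd p"] by auto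
    from power_mono[OF this norm_ge_zero, of 2] show ?thesis using True by (simp add: pair_sqdist_def)
  qed (simp add: pair_sqdist_def)
  then show ?thesis by blast
qed

lemma pair_sqdist_measurable [measurable]: "pair_sqdist \<in> borel_measurable (\<mu> \<Otimes>\<^sub>M \<mu>)"
  unfolding pair_sqdist_def by measurable

lemma map_prod_T_measurable [measurable]: "map_prod T T \<in> measurable (\<mu> \<Otimes>\<^sub>M \<mu>) (\<mu> \<Otimes>\<^sub>M \<mu>)"
  unfolding map_prod_def by measurable

lemma dQ2_eq_birkhoff_average:
  assumes "x \<in> X" "y \<in> X"
  shows "dQ2 \<Phi> F \<Delta>t Q x y = birkhoff_average (map_prod T T) pair_sqdist Q (x, y)"
  using funpow_T_in_X[OF assms(1)] funpow_T_in_X[OF assms(2)]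
  by (simp add: dQ2_def birkhoff_average_def birkhoff_sum_def funpow_map_prod pair_sqdist_def
      continuous_flow_iterate[OF flow])

lemma k_invariant:
  assumes "x \<in> X" "y \<in> X"
  shows "k (T x) (T y) = k x y"
proof -
  obtain B where "\<And>p. \<bar>pair_sqdist p\<bar> \<le> B" using pair_sqdist_bounded by blast
  then have "(\<lambda>Q. dQ2 \<Phi> F \<Delta>t Q (T x) (T y) - dQ2 \<Phi> F \<Delta>t Q x y) \<longlonglongrightarrow> 0"
    using birkhoff_average_map_diff[of pair_sqdist B "map_prod T T" "(x, y)"] assms
    by (simp add: dQ2_eq_birkhoff_average T_in_X_iff)
  then show ?thesis
    using convergent_iff_tendsto_diff lim_eq_if_tendsto_diff by (simp add: k_inf_def)
qed

lemma AE_dQ2_convergent: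
  "AE p in \<mu> \<Otimes>\<^sub>M \<mu>. p \<in> X \<times> X \<longrightarrow> convergent (\<lambda>Q. dQ2 \<Phi> F \<Delta>t Q (fst p) (snd p))"
proof -
  obtain B where "\<And>p. \<bar>pair_sqdist p\<bar> \<le> B" using pair_sqdist_bounded by blast
  moreover have "prob_space (\<mu> \<Otimes>\<^sub>M \<mu>)" by (rule prob_space_pair[OF prob prob])
  moreover have "distr (\<mu> \<Otimes>\<^sub>M \<mu>) (\<mu> \<Otimes>\<^sub>M \<mu>) (map_prod T T) = \<mu> \<Otimes>\<^sub>M \<mu>"
    by (rule distr_pair_measure_map_prod[OF _ flow_measurable distr_T]) unfold_locales
  ultimately have "AE p in \<mu> \<Otimes>\<^sub>M \<mu>. convergent (\<lambda>n. birkhoff_average (map_prod T T) pair_sqdist n p)"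
    by (intro birkhoff_ergodic_bounded) simp_all
  then show ?thesis
    by (rule AE_mp) (auto intro!: AE_I2 simp: dQ2_eq_birkhoff_average)
qed


lemma k_measurable [measurable]: "(\<lambda>p. k (fst p) (snd p)) \<in> borel_measurable (\<mu> \<Otimes>\<^sub>M \<mu>)"
  unfolding k_inf_def dQ2_def by measurable

lemma k_measurable_right [measurable]: "k x \<in> borel_measurable \<mu>"
  using measurable_Pair2[OF k_measurable, of x] space_eq by simp

lemma k_bounds: "0 \<le> k x y" "k x y \<le> 1"
  using k_inf_bounds[OF eps_pos, of \<Phi> F \<Delta>t x y] by auto

lemma rho_eq_integral: "\<rho> x = (\<integral>y. indicator X y * k x y \<partial>\<mu>)"
  by (simp add: rho_def set_lebesgue_integral_def)

lemma rho_measurable [measurable]: "\<rho> \<in> borel_measurable \<mu>"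
  unfolding rho_eq_integral[abs_def]
  by (rule borel_measurable_lebesgue_integral) (unfold case_prod_beta', measurable)

lemma integrable_kernel: "integrable \<mu> (\<lambda>y. indicator X y * k x y)"
  by (rule integrable_const_bound[where B=1]) (auto simp: indicator_def k_bounds)

lemma rho_bounds: "0 \<le> \<rho> x \<and> \<rho> x \<le> 1"
proof -
  have "(\<integral>y. indicator X y * k x y \<partial>\<mu>) \<le> (\<integral>y. 1 \<partial>\<mu>)"
    by (intro integral_mono integrable_kernel) (auto simp: indicator_def k_bounds)
  moreover have "0 \<le> (\<integral>y. indicator X y * k x y \<partial>\<mu>)"
    by (intro integral_nonneg_AE AE_I2) (simp add: k_bounds)
  ultimately show ?thesis by (simp add: rho_eq_integral prob_space)
qed

lemma integrable_rho: "integrable \<mu> \<rho>"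
  by (rule integrable_const_bound[where B=1]) (use rho_bounds in auto)

lemma rho_invariant:
  assumes "x \<in> X"
  shows "\<rho> (T x) = \<rho> x"
proof -
  have "\<rho> (T x) = (\<integral>y. indicator X y * k (T x) y \<partial>distr \<mu> \<mu> T)"
    by (simp add: rho_eq_integral distr_T)
  also have "\<dots> = (\<integral>y. indicator X (T y) * k (T x) (T y) \<partial>\<mu>)"
    by (rule integral_distr) measurable
  also have "\<dots> = (\<integral>y. indicator X y * k x y \<partial>\<mu>)"
    using k_invariant[OF assms] by (intro Bochner_Integration.integral_cong) (auto simp: indicator_def T_in_X_iff)
  finally show ?thesis by (simp add: rho_eq_integral)
qed

lemma AE_in_X_times_X: "AE p in \<mu> \<Otimes>\<^sub>M \<mu>. p \<in> X \<times> X"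
proof (rule prob_space.AE_prob_1[OF prob_space_pair[OF prob prob]])
  show "measure (\<mu> \<Otimes>\<^sub>M \<mu>) (X \<times> X) = 1"
    using X_full by (simp add: measure_def emeasure_pair_measure_Times)
qed

text \<open>By Fubini, \<open>\<integral>\<rho>\<close> is the integral of \<open>k\<close> over \<open>X \<times> X\<close>, where \<open>k > 0\<close> almost
  everywhere because the limit defining \<open>d\<^sub>\<infinity>\<^sup>2\<close> exists there.\<close>
lemma integral_rho_pos: "0 < (\<integral>x. \<rho> x \<partial>\<mu>)"
proof -
  interpret pair_prob_space \<mu> \<mu> by unfold_locales
  let ?K = "\<lambda>p. indicator X (snd p) * k (fst p) (snd p)"
  have K_integrable: "integrable (\<mu> \<Otimes>\<^sub>M \<mu>) ?K"
  proof (rule integrable_const_bound[where B=1])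
    show "AE p in \<mu> \<Otimes>\<^sub>M \<mu>. norm (?K p) \<le> 1"
      by (intro AE_I2) (simp add: indicator_def k_bounds abs_le_iff)
  qed measurable
  from AE_in_X_times_X AE_dQ2_convergent have "AE p in \<mu> \<Otimes>\<^sub>M \<mu>. 0 < ?K p"
    by eventually_elim (auto simp: k_inf_pos mem_Times_iff)
  then have "0 < (\<integral>p. ?K p \<partial>(\<mu> \<Otimes>\<^sub>M \<mu>))"
    using P.integral_less_AE_space[OF _ K_integrable, of "\<lambda>_. 0"] by (simp add: P.emeasure_space_1)
  also have "\<dots> = (\<integral>x. \<rho> x \<partial>\<mu>)"
    using integral_fst'[OF K_integrable]
    by (simp add: rho_eq_integral)
  finally show ?thesis .
qed

theorem rho_AE_eq_const:
  assumes "ergodic_map \<mu> T"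
  shows "\<exists>c>0. AE x in \<mu>. \<rho> x = c"
proof -
  let ?r = "\<lambda>x. \<rho> x * indicator X x"
  have "integrable \<mu> ?r" by (rule integrable_real_mult_indicator[OF X_sets integrable_rho])
  then have "AE x in \<mu>. ?r x = (\<integral>y. ?r y \<partial>\<mu>)"
    by (rule ergodic_map_invariant_AE_eq_integral[OF prob assms, rotated])
       (auto simp: indicator_def T_in_X_iff rho_invariant)
  moreover have "(\<integral>y. ?r y \<partial>\<mu>) = (\<integral>y. \<rho> y \<partial>\<mu>)"
    using AE_in_X by (intro integral_cong_AE) (auto elim: eventually_mono)
  ultimately have "AE x in \<mu>. \<rho> x = (\<integral>y. \<rho> y \<partial>\<mu>)"
    using AE_in_X by (auto elim: eventually_elim2)
  then show ?thesis using integral_rho_pos by blast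
qed

end

theorem mainTheorem10:
  fixes \<mu> :: "'a::metric_space measure"
    and \<Phi> :: "real \<Rightarrow> 'a \<Rightarrow> 'a"
    and F :: "'a \<Rightarrow> real^'d"
    and X :: "'a set"
    and \<Delta>t \<epsilon> :: real
  assumes manifold: "topological_manifold (UNIV :: 'a set) TYPE('e::euclidean_space)"
    and flow: "continuous_flow \<Phi>"
    and borel: "sets \<mu> = sets borel"
    and prob: "prob_space \<mu>"
    and erg: "ergodic_flow \<mu> \<Phi>"
    and X_def: "X = measure_support \<mu>"
    and X_compact: "compact X"
    and X_full: "emeasure \<mu> X = 1"
    and F_cont: "continuous_on UNIV F"
    and dt_pos: "\<Delta>t > 0"
    and erg_dt: "ergodic_map \<mu> (\<Phi> \<Delta>t)"
    and eps_pos: "\<epsilon> > 0"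
  shows "(\<exists>c>0. AE x in \<mu>. rho \<mu> X \<Phi> F \<Delta>t \<epsilon> x = c) \<and>
         (continuity_assumption \<mu> \<Phi> F X \<longrightarrow>
            (\<exists>g. continuous_on X g \<and> (AE x in \<mu>. rho \<mu> X \<Phi> F \<Delta>t \<epsilon> x = g x)) \<and>
            (\<exists>h. continuous_on X h \<and> (AE x in \<mu>. 1 / rho \<mu> X \<Phi> F \<Delta>t \<epsilon> x = h x)))"
proof -
  interpret flow_kernel_setting \<mu> \<Phi> F X \<Delta>t \<epsilon>
    using prob borel flow erg X_def X_compact X_full F_cont eps_pos
    by (intro flow_kernel_setting.intro) (simp_all add: ergodic_flow_def)
  obtain c where "c > 0" and c: "AE x in \<mu>. \<rho> x = c"
    using rho_AE_eq_const[OF erg_dt] by blast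
  have "\<exists>g. continuous_on X g \<and> (AE x in \<mu>. \<rho> x = g x)"
    using c by (intro exI[of _ "\<lambda>_. c"]) simp
  moreover have "\<exists>h. continuous_on X h \<and> (AE x in \<mu>. 1 / \<rho> x = h x)"
    using c by (intro exI[of _ "\<lambda>_. 1 / c"]) (auto elim: eventually_mono)
  ultimately show ?thesis using \<open>c > 0\<close> c by blast
qed

end
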